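(* Let $f\in\mathcal{F}$, let the parameters be randomly initialized as described, and run SGD as described, under the no-explosion assumption with constant $K$. Then there is a constant $C>0$ depending only on $d$ and $K$ (not on $m,\eta,t,T,N,\|f\|_{\mathcal{F}},{\bm x}$) such that for every realization, every ${\bm x}\in\Gamma$, every $t\in\{1,\dots,T\}$ and every $i\in\{1,\dots,m\}$, writing $\rho:=m^{-\alpha-2\beta}\|f\|_{\mathcal{F}}+1$: (a) $\|{\bm w}_i^{(t)}-{\bm w}_i^{(0)}\|_2\le C\,\eta t m^{-\alpha}\rho$; (b) $\big|\psi({\bm x};W^{(0)}+W_t)-g({\bm x};W^{(0)}+W_t)\big|\le C\big(\eta^3t^3m^{1-4\alpha}\rho^3+\eta t m^{1-2\alpha-2\beta}\rho\big)$; (c) $\big\|\nabla_W\mathcal{L}(\psi({\bm x};W^{(0)}+W_t))-\nabla_W\mathcal{L}(g({\bm x};W^{(0)}+W_t))\big\|_{2,1}\le C\big(\eta^5t^5m^{2-7\alpha}\rho^5+\eta^3t^3m^{2-5\alpha-2\beta}\rho^3+\eta^2t^2m^{2-4\alpha-3\beta}\rho^2+\eta^2t^2m^{1-4\alpha-2\beta}\|f\|_{\mathcal{F}}\rho^2+\eta t m^{2-3\alpha-4\beta}\rho+m^{2-2\alpha-5\beta}+m^{1-2\alpha-4\beta}\|f\|_{\mathcal{F}}\big)$.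
   Context: Fix an integer $d\ge1$ and let $\Gamma=\{{\bm x}\in\mathbb{R}^d:\|{\bm x}\|_2\le1\}$. Fix exponents $\alpha,\beta\ge0$ and a width $m\in\mathbb{N}^+$. Random initialization: for $i=1,\dots,m$, independently, $a_i^{(0)}\sim\mathcal{U}(-m^{-\alpha},m^{-\alpha})$, ${\bm w}_i^{(0)}\in\mathbb{R}^d$ has i.i.d. coordinates $\sim\mathcal{U}(-m^{-\beta},m^{-\beta})$, and $b_i^{(0)}\sim\mathcal{U}(-m^{-\beta},m^{-\beta})$. Let $\Lambda:=[-m^{-\alpha},m^{-\alpha}]\times[-m^{-\beta},m^{-\beta}]^d\times[-m^{-\beta},m^{-\beta}]$, $p(\theta)=|\Lambda|^{-1}\mathbb{I}_{\theta\in\Lambda}$. For $\theta=(a,{\bm w},b)\in\Lambda$, ${\bm x}\in\Gamma$: ${\bm\zeta}({\bm x};\theta)=a\big(2d({\bm w}^\top{\bm x}+b)^2+12({\bm w}^\top{\bm x})({\bm w}^\top{\bm x}+b)+6({\bm w}^\top{\bm w})(\|{\bm x}\|_2^2-1)\big){\bm x}\,\mathbb{I}_{{\bm w}^\top{\bm x}+b\ge0}$. $\mathcal{F}$ is the class of $f:\Gamma\to\mathbb{R}$ with $f({\bm x})=\int_\Lambda{\bm\alpha}(\theta)^\top{\bm\zeta}({\bm x};\theta)\,{\rm d}\theta$ for some ${\bm\alpha}:\Lambda\to\mathbb{R}^d$, normed by $\|f\|_{\mathcal{F}}:=\inf_{{\bm\alpha}}\max_{\theta\in\Lambda}\|{\bm\alpha}(\theta)\|_2/p(\theta)$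 (infimum assumed attained). PINN: for $W=[{\bm w}_1~\dots~{\bm w}_m]$, ${\bm w}_i\in\mathbb{R}^d$ (only the ${\bm w}_i$ are trainable; $a_i^{(0)},b_i^{(0)}$ stay fixed), $$\psi({\bm x};W)=\sum_{i=1}^m a_i^{(0)}\Big(2d({\bm w}_i^\top{\bm x}+b_i^{(0)})^3+12({\bm w}_i^\top{\bm x}+b_i^{(0)})^2({\bm w}_i^\top{\bm x})+6({\bm w}_i^\top{\bm x}+b_i^{(0)})({\bm w}_i^\top{\bm w}_i)(\|{\bm x}\|_2^2-1)\Big)\mathbb{I}_{{\bm w}_i^\top{\bm x}+b_i^{(0)}\ge0}$$ (this is $\Delta[(\|{\bm x}\|_2^2-1)\sum_i a_i^{(0)}\sigma({\bm w}_i^\top{\bm x}+b_i^{(0)})]$ with $\sigma(s)=\max(0,s)^3$). Pseudo network: $$g({\bm x};W)=\sum_{i=1}^m a_i^{(0)}({\bm w}_i^\top{\bm x}+b_i^{(0)})\Big(2d({{\bm w}_i^{(0)}}^\top{\bm x}+b_i^{(0)})^2+12({{\bm w}_i^{(0)}}^\top{\bm x})({{\bm w}_i^{(0)}}^\top{\bm x}+b_i^{(0)})+6({{\bm w}_i^{(0)}}^\top{\bm w}_i^{(0)})(\|{\bm x}\|_2^2-1)\Big)\mathbb{I}_{{{\bm w}_i^{(0)}}^\top{\bm x}+b_i^{(0)}\ge0}.$$ Loss: $\mathcal{L}(h({\bm x})):=|h({\bm x})-f({\bm x})|^2$. SGD: training set $X=\{{\bm x}_1,\dots,{\bm x}_N\}\subset\Gamma$;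 $W^{(0)}=[{\bm w}_1^{(0)}~\dots~{\bm w}_m^{(0)}]$; for $t=1,\dots,T$, pick ${\bm x}^{(t)}$ uniformly from $X$ and set $W^{(t)}=W^{(t-1)}-\eta\nabla_W\mathcal{L}(\psi({\bm x}^{(t)};W^{(t-1)}))$, with learning rate $\eta>0$; $W_t:=W^{(t)}-W^{(0)}$, and ${\bm w}_i^{(t)}$ is the $i$-th column of $W^{(t)}$. Norm: $\|W\|_{2,1}=\sum_i\|{\bm w}_i\|_2$. No-explosion assumption: there is a constant $K\ge1$, independent of $m,\eta,t,T,N$, such that $\|{\bm w}_i^{(t)}\|_2\le K$ and $|\psi({\bm x};W^{(t)})|\le K$ for all $i$, all $t\in\{0,\dots,T\}$ and all ${\bm x}\in\Gamma$. *)

theory Defs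
  imports "HOL-Analysis.Analysis"
begin

definition Gam :: "(real^'d::finite) set" where
  "Gam = cball 0 1"

definition Lam :: "nat \<Rightarrow> real \<Rightarrow> real \<Rightarrow> (real \<times> (real^'d::finite) \<times> real) set" where
  "Lam m al be = {(a, w, b). \<bar>a\<bar> \<le> real m powr (-al) \<and>
      (\<forall>j. \<bar>w $ j\<bar> \<le> real m powr (-be)) \<and> \<bar>b\<bar> \<le> real m powr (-be)}"

definition pdens :: "nat \<Rightarrow> real \<Rightarrow> real \<Rightarrow> (real \<times> (real^'d::finite) \<times> real) \<Rightarrow> real" where
  "pdens m al be \<theta> = (if \<theta> \<in> Lam m al be
     then 1 / ((2 * real m powr (-al)) * (2 * real m powr (-be)) ^ (CARD('d) + 1)) else 0)"

definition zeta :: "real^'d::finite \<Rightarrow> (real \<times> (real^'d) \<times> real) \<Rightarrow> real^'d" where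
  "zeta x \<theta> = (case \<theta> of (a, w, b) \<Rightarrow>
     (a * (2 * real CARD('d) * (w \<bullet> x + b)^2 + 12 * (w \<bullet> x) * (w \<bullet> x + b)
          + 6 * (w \<bullet> w) * ((norm x)^2 - 1))
        * (if w \<bullet> x + b \<ge> 0 then 1 else 0)) *\<^sub>R x)"

text \<open>Admissible representations alpha of f (bounded, so the max of |alpha|/p is finite).\<close>
definition reps :: "nat \<Rightarrow> real \<Rightarrow> real \<Rightarrow> (real^'d::finite \<Rightarrow> real)
     \<Rightarrow> ((real \<times> (real^'d) \<times> real) \<Rightarrow> real^'d) set" where
  "reps m al be f = {A. bounded (A ` Lam m al be) \<and>
      (\<forall>x\<in>Gam. ((\<lambda>\<theta>. A \<theta> \<bullet> zeta x \<theta>) has_integral f x) (Lam m al be))}"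

definition repnorm :: "nat \<Rightarrow> real \<Rightarrow> real \<Rightarrow> ((real \<times> (real^'d::finite) \<times> real) \<Rightarrow> real^'d) \<Rightarrow> real" where
  "repnorm m al be A = (SUP \<theta>\<in>Lam m al be. norm (A \<theta>) / pdens m al be \<theta>)"

definition inF :: "nat \<Rightarrow> real \<Rightarrow> real \<Rightarrow> (real^'d::finite \<Rightarrow> real) \<Rightarrow> bool" where
  "inF m al be f \<longleftrightarrow> reps m al be f \<noteq> {}"

definition Fnorm :: "nat \<Rightarrow> real \<Rightarrow> real \<Rightarrow> (real^'d::finite \<Rightarrow> real) \<Rightarrow> real" where
  "Fnorm m al be f = Inf (repnorm m al be ` reps m al be f)"

definition psi :: "nat \<Rightarrow> (nat \<Rightarrow> real) \<Rightarrow> (nat \<Rightarrow> real) \<Rightarrow> (nat \<Rightarrow> real^'d::finite) \<Rightarrow> real^'d \<Rightarrow> real" where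
  "psi m a b W x = (\<Sum>i\<in>{1..m}. a i *
     (2 * real CARD('d) * (W i \<bullet> x + b i)^3 + 12 * (W i \<bullet> x + b i)^2 * (W i \<bullet> x)
      + 6 * (W i \<bullet> x + b i) * (W i \<bullet> W i) * ((norm x)^2 - 1))
     * (if W i \<bullet> x + b i \<ge> 0 then 1 else 0))"

text \<open>Pseudo network g(x;W) (linearisation at W0).\<close>
definition pseudo :: "nat \<Rightarrow> (nat \<Rightarrow> real) \<Rightarrow> (nat \<Rightarrow> real) \<Rightarrow> (nat \<Rightarrow> real^'d::finite)
     \<Rightarrow> (nat \<Rightarrow> real^'d) \<Rightarrow> real^'d \<Rightarrow> real" where
  "pseudo m a b W0 W x = (\<Sum>i\<in>{1..m}. a i * (W i \<bullet> x + b i) *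
     (2 * real CARD('d) * (W0 i \<bullet> x + b i)^2 + 12 * (W0 i \<bullet> x) * (W0 i \<bullet> x + b i)
      + 6 * (W0 i \<bullet> W0 i) * ((norm x)^2 - 1))
     * (if W0 i \<bullet> x + b i \<ge> 0 then 1 else 0))"

text \<open>Gradient w.r.t. w_i of L(psi(x;W)) = |psi(x;W) - f(x)|^2, computed by the chain rule
  with the indicator treated as locally constant (the standard convention).\<close>
definition grad_psi :: "nat \<Rightarrow> (nat \<Rightarrow> real) \<Rightarrow> (nat \<Rightarrow> real) \<Rightarrow> (real^'d::finite \<Rightarrow> real)
     \<Rightarrow> (nat \<Rightarrow> real^'d) \<Rightarrow> real^'d \<Rightarrow> nat \<Rightarrow> real^'d" where
  "grad_psi m a b f W x i =
     (let s = W i \<bullet> x + b i; u = W i \<bullet> x; q = W i \<bullet> W i; r = (norm x)^2 - 1 in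
      (2 * (psi m a b W x - f x) * a i * (if s \<ge> 0 then 1 else 0)) *\<^sub>R
        ((6 * real CARD('d) * s^2 + 24 * s * u + 12 * s^2 + 6 * q * r) *\<^sub>R x + (12 * s * r) *\<^sub>R W i))"

text \<open>Gradient w.r.t. w_i of L(g(x;W)) = |g(x;W) - f(x)|^2 (g is linear in W).\<close>
definition grad_pseudo :: "nat \<Rightarrow> (nat \<Rightarrow> real) \<Rightarrow> (nat \<Rightarrow> real) \<Rightarrow> (real^'d::finite \<Rightarrow> real)
     \<Rightarrow> (nat \<Rightarrow> real^'d) \<Rightarrow> (nat \<Rightarrow> real^'d) \<Rightarrow> real^'d \<Rightarrow> nat \<Rightarrow> real^'d" where
  "grad_pseudo m a b f W0 W x i =
     (2 * (pseudo m a b W0 W x - f x) * a i *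
       (2 * real CARD('d) * (W0 i \<bullet> x + b i)^2 + 12 * (W0 i \<bullet> x) * (W0 i \<bullet> x + b i)
        + 6 * (W0 i \<bullet> W0 i) * ((norm x)^2 - 1))
       * (if W0 i \<bullet> x + b i \<ge> 0 then 1 else 0)) *\<^sub>R x"

definition norm21 :: "nat \<Rightarrow> (nat \<Rightarrow> real^'d::finite) \<Rightarrow> real" where
  "norm21 m V = (\<Sum>i\<in>{1..m}. norm (V i))"

end

theory Submission
  imports Defs
begin

text \<open>Each neuron of the PINN is \<open>a\<^sub>i s\<^sub>i lap_coef w\<^sub>i b\<^sub>i x\<close> with \<open>s\<^sub>i = w\<^sub>i \<bullet> x + b\<^sub>i\<close>,
  and the pseudo network is the same sum with \<open>lap_coef\<close> frozen at the initial weights.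
  The integral representation of \<open>f\<close> gives \<open>\<bar>f\<bar> = O(m powr (-al - 2 * be) * Fnorm)\<close>, so under
  the no-explosion assumption every SGD gradient is \<open>O(m powr -al * \<rho>)\<close> and the weights drift
  by at most \<open>\<delta> = O(\<eta> * t * m powr -al * \<rho>)\<close>. The coefficient \<open>lap_coef\<close> is quadratic in
  \<open>w \<bullet> x + b\<close>, \<open>w \<bullet> x\<close> and \<open>w \<bullet> w\<close>, and its sign gate can switch only where \<open>\<bar>s\<^sub>i\<bar> \<le> \<delta>\<close>;
  hence each neuron of \<open>psi - pseudo\<close> is \<open>O(m powr -al * \<delta> * (m powr -be + \<delta>)\<^sup>2)\<close>.
  Bounding \<open>psi\<close>, \<open>pseudo\<close>, \<open>f\<close> and both gradient formulas in the same way, summing over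
  the \<open>m\<close> neurons and expanding in \<open>m powr -al\<close>, \<open>m powr -be\<close> and \<open>\<delta>\<close> gives the three bounds.\<close>

lemma abs_mult_le:
  fixes x y X Y :: real
  assumes "\<bar>x\<bar> \<le> X" "\<bar>y\<bar> \<le> Y"
  shows "\<bar>x * y\<bar> \<le> X * Y"
  unfolding abs_mult using assms by (intro mult_mono) auto

lemma add_power_le_two_power:
  fixes x y :: real
  assumes "x \<ge> 0" "y \<ge> 0"
  shows "(x + y) ^ k \<le> 2 ^ k * (x ^ k + y ^ k)"
proof -
  have "(x + y) ^ k \<le> (2 * max x y) ^ k"
    using assms by (intro power_mono) auto
  also have "\<dots> \<le> 2 ^ k * (x ^ k + y ^ k)"
    using assms by (auto simp: power_mult_distrib max_def)
  finally show ?thesis .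
qed

lemma norm_le_card_mult:
  fixes w :: "real^'d::finite"
  assumes "\<And>j. \<bar>w $ j\<bar> \<le> e"
  shows "norm w \<le> real CARD('d) * e"
proof -
  have "norm w \<le> (\<Sum>j\<in>UNIV. \<bar>w $ j\<bar>)" by (rule norm_le_l1_cart)
  also have "\<dots> \<le> real CARD('d) * e"
    using sum_bounded_above[of UNIV "\<lambda>j. \<bar>w $ j\<bar>" e] assms by simp
  finally show ?thesis .
qed

lemma abs_inner_le_norm:
  fixes w x :: "'a::real_inner"
  assumes "norm x \<le> 1"
  shows "\<bar>w \<bullet> x\<bar> \<le> norm w"
  using Cauchy_Schwarz_ineq2[of w x] mult_left_mono[OF assms, of "norm w"] by simp

lemma abs_norm_sq_minus_one_le: "norm x \<le> 1 \<Longrightarrow> \<bar>(norm x)\<^sup>2 - 1\<bar> \<le> 1"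
  by (simp add: abs_le_iff power_le_one)

lemma neuron_inputs_le:
  fixes w x :: "'a::real_inner"
  assumes "norm w \<le> R" "\<bar>b\<bar> \<le> e" "norm x \<le> 1"
  shows "\<bar>w \<bullet> x\<bar> \<le> R + e" "\<bar>w \<bullet> x + b\<bar> \<le> R + e" "\<bar>w \<bullet> w\<bar> \<le> (R + e)\<^sup>2" "norm w \<le> R + e"
proof -
  have wx: "\<bar>w \<bullet> x\<bar> \<le> R" using abs_inner_le_norm[OF assms(3), of w] assms(1) by linarith
  then show "\<bar>w \<bullet> x\<bar> \<le> R + e" "\<bar>w \<bullet> x + b\<bar> \<le> R + e" "norm w \<le> R + e"
    using assms(1,2) by auto
  have "\<bar>w \<bullet> w\<bar> = (norm w)\<^sup>2" by (simp add: power2_norm_eq_inner)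
  also have "\<dots> \<le> (R + e)\<^sup>2" using assms(1,2) by (intro power_mono) auto
  finally show "\<bar>w \<bullet> w\<bar> \<le> (R + e)\<^sup>2" .
qed

lemma neuron_inputs_diff_le:
  fixes w w0 x :: "'a::real_inner"
  assumes "norm (w - w0) \<le> d" "norm w0 \<le> R" "norm x \<le> 1"
  shows "\<bar>w \<bullet> x - w0 \<bullet> x\<bar> \<le> d" "\<bar>w \<bullet> w - w0 \<bullet> w0\<bar> \<le> d * (2 * R + d)"
proof -
  show "\<bar>w \<bullet> x - w0 \<bullet> x\<bar> \<le> d"
    using abs_inner_le_norm[OF assms(3), of "w - w0"] assms(1) by (simp add: inner_diff_left)
  have "norm (w + w0) = norm ((w - w0) + 2 *\<^sub>R w0)" by (simp add: scaleR_2 algebra_simps)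
  also have "\<dots> \<le> norm (w - w0) + 2 * norm w0" by (rule order_trans[OF norm_triangle_ineq]) simp
  finally have "norm (w + w0) \<le> 2 * R + d" using assms(1,2) by linarith
  then have "\<bar>(w - w0) \<bullet> (w + w0)\<bar> \<le> d * (2 * R + d)"
    using Cauchy_Schwarz_ineq2[of "w - w0" "w + w0"] assms(1)
    by (meson mult_mono norm_ge_zero order_trans)
  then show "\<bar>w \<bullet> w - w0 \<bullet> w0\<bar> \<le> d * (2 * R + d)"
    by (simp add: algebra_simps inner_commute)
qed

section \<open>The Laplacian coefficient of a neuron\<close>

definition lap_poly :: "real \<Rightarrow> real \<Rightarrow> real \<Rightarrow> real \<Rightarrow> real \<Rightarrow> real" where
  "lap_poly n s u q r = 2 * n * s\<^sup>2 + 12 * u * s + 6 * q * r"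

text \<open>\<open>(w \<bullet> x + b) * lap_coef w b x\<close> is the Laplacian of \<open>((norm x)\<^sup>2 - 1) * max 0 (w \<bullet> x + b) ^ 3\<close>.\<close>

definition lap_coef :: "real^'d::finite \<Rightarrow> real \<Rightarrow> real^'d \<Rightarrow> real" where
  "lap_coef w b x = lap_poly (real CARD('d)) (w \<bullet> x + b) (w \<bullet> x) (w \<bullet> w) ((norm x)\<^sup>2 - 1)
     * (if w \<bullet> x + b \<ge> 0 then 1 else 0)"

lemma zeta_eq_lap_coef: "zeta x (a, w, b) = (a * lap_coef w b x) *\<^sub>R x"
  by (simp add: zeta_def lap_coef_def lap_poly_def mult.assoc)

lemma psi_eq_sum_lap_coef:
  "psi m a b W x = (\<Sum>i\<in>{1..m}. a i * (W i \<bullet> x + b i) * lap_coef (W i) (b i) x)"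
  unfolding psi_def lap_coef_def lap_poly_def
  by (intro sum.cong) (simp_all add: algebra_simps power2_eq_square power3_eq_cube)

lemma pseudo_eq_sum_lap_coef:
  "pseudo m a b W0 W x = (\<Sum>i\<in>{1..m}. a i * (W i \<bullet> x + b i) * lap_coef (W0 i) (b i) x)"
  unfolding pseudo_def lap_coef_def lap_poly_def by (simp add: mult.assoc)

lemma grad_pseudo_eq_lap_coef:
  "grad_pseudo m a b f W0 W x i = (2 * (pseudo m a b W0 W x - f x) * a i * lap_coef (W0 i) (b i) x) *\<^sub>R x"
  unfolding grad_pseudo_def lap_coef_def lap_poly_def by (simp add: mult.assoc)

lemma abs_lap_poly_le:
  fixes n s u q r L :: real
  assumes "n \<ge> 0" "\<bar>s\<bar> \<le> L" "\<bar>u\<bar> \<le> L" "\<bar>q\<bar> \<le> L\<^sup>2" "\<bar>r\<bar> \<le> 1"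
  shows "\<bar>lap_poly n s u q r\<bar> \<le> (2 * n + 18) * L\<^sup>2"
proof -
  have "\<bar>s\<^sup>2\<bar> \<le> L\<^sup>2" "\<bar>u * s\<bar> \<le> L\<^sup>2" "\<bar>q * r\<bar> \<le> L\<^sup>2"
    using abs_mult_le[OF assms(2,2)] abs_mult_le[OF assms(3,2)] abs_mult_le[OF assms(4,5)]
    by (simp_all add: power2_eq_square)
  then have "\<bar>2 * n * s\<^sup>2\<bar> \<le> 2 * n * L\<^sup>2" "\<bar>12 * u * s\<bar> \<le> 12 * L\<^sup>2" "\<bar>6 * q * r\<bar> \<le> 6 * L\<^sup>2"
    using assms(1) by (simp_all add: abs_mult mult_left_mono)
  then show ?thesis unfolding lap_poly_def by (simp add: algebra_simps)
qed

lemma abs_lap_poly_diff_le: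
  fixes n s s0 u u0 q q0 r d L :: real
  assumes "n \<ge> 0" "\<bar>s\<bar> \<le> L" "\<bar>s0\<bar> \<le> L" "\<bar>u0\<bar> \<le> L" "\<bar>s - s0\<bar> \<le> d" "\<bar>u - u0\<bar> \<le> d"
    "\<bar>q - q0\<bar> \<le> 2 * d * L" "\<bar>r\<bar> \<le> 1"
  shows "\<bar>lap_poly n s u q r - lap_poly n s0 u0 q0 r\<bar> \<le> 2 * (2 * n + 18) * d * L"
proof -
  have "\<bar>s + s0\<bar> \<le> 2 * L" using assms(2,3) by linarith
  then have p: "\<bar>(s - s0) * (s + s0)\<bar> \<le> d * (2 * L)" "\<bar>(u - u0) * s\<bar> \<le> d * L"
    "\<bar>u0 * (s - s0)\<bar> \<le> L * d" "\<bar>(q - q0) * r\<bar> \<le> (2 * d * L) * 1"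
    using assms abs_mult_le by blast+
  have "\<bar>2 * n * ((s - s0) * (s + s0))\<bar> \<le> 2 * n * (d * (2 * L))"
    using mult_left_mono[OF p(1), of "2 * n"] assms(1) by (simp add: abs_mult)
  moreover have "\<bar>(u - u0) * s + u0 * (s - s0)\<bar> \<le> 2 * d * L"
    using p(2,3) abs_triangle_ineq[of "(u - u0) * s" "u0 * (s - s0)"] by (simp add: mult.commute)
  moreover have "\<bar>6 * ((q - q0) * r)\<bar> \<le> 6 * (2 * d * L)"
    using p(4) by simp
  moreover have "lap_poly n s u q r - lap_poly n s0 u0 q0 r
    = 2 * n * ((s - s0) * (s + s0)) + 12 * ((u - u0) * s + u0 * (s - s0)) + 6 * ((q - q0) * r)"
    by (simp add: lap_poly_def algebra_simps power2_eq_square)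
  ultimately show ?thesis by (simp add: algebra_simps)
qed

lemma abs_gated_diff_le:
  fixes s s0 P P0 c d L :: real
  assumes "\<bar>s\<bar> \<le> L" "\<bar>s - s0\<bar> \<le> d" "\<bar>P\<bar> \<le> c * L\<^sup>2" "\<bar>P0\<bar> \<le> c * L\<^sup>2" "\<bar>P - P0\<bar> \<le> 2 * c * d * L"
  shows "\<bar>s * (P * (if s \<ge> 0 then 1 else 0)) - s * (P0 * (if s0 \<ge> 0 then 1 else 0))\<bar> \<le> 2 * c * d * L\<^sup>2"
proof -
  have "d \<ge> 0" "c * L\<^sup>2 \<ge> 0" using assms(2,3) by linarith+
  then have nonneg: "0 \<le> d * (c * L\<^sup>2)" by simp
  then have cdL: "d * (c * L\<^sup>2) \<le> 2 * c * d * L\<^sup>2" by (simp add: algebra_simps)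
  consider (on) "s \<ge> 0" "s0 \<ge> 0" | (off) "s < 0" "s0 < 0" | (switch) "\<bar>s\<bar> \<le> d" "s \<ge> 0 \<longleftrightarrow> s0 < 0"
    using assms(2) by linarith
  then show ?thesis
  proof cases
    case on
    then have "\<bar>s * (P - P0)\<bar> \<le> L * (2 * c * d * L)" using assms(1,5) by (intro abs_mult_le)
    then show ?thesis using on by (simp add: algebra_simps power2_eq_square)
  next
    case switch
    then have "\<bar>s * P\<bar> \<le> d * (c * L\<^sup>2)" "\<bar>s * P0\<bar> \<le> d * (c * L\<^sup>2)"
      using assms(3,4) abs_mult_le by blast+
    then have "\<bar>s * (P * (if s \<ge> 0 then 1 else 0)) - s * (P0 * (if s0 \<ge> 0 then 1 else 0))\<bar> \<le> d * (c * L\<^sup>2)"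
      using switch by (cases "s \<ge> 0") auto
    then show ?thesis using cdL by linarith
  qed (use cdL nonneg in simp)
qed

lemma abs_lap_coef_le:
  fixes w x :: "real^'d::finite"
  assumes "norm w \<le> R" "\<bar>b\<bar> \<le> e" "norm x \<le> 1"
  shows "\<bar>lap_coef w b x\<bar> \<le> (2 * real CARD('d) + 18) * (R + e)\<^sup>2"
proof -
  note inputs = neuron_inputs_le[OF assms]
  have "\<bar>lap_poly (real CARD('d)) (w \<bullet> x + b) (w \<bullet> x) (w \<bullet> w) ((norm x)\<^sup>2 - 1)\<bar> \<le> (2 * real CARD('d) + 18) * (R + e)\<^sup>2"
    using abs_lap_poly_le inputs abs_norm_sq_minus_one_le[OF assms(3)] by simp
  then show ?thesis
    unfolding lap_coef_def using inputs by (simp add: zero_le_mult_iff)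
qed

lemma abs_lap_coef_diff_le:
  fixes w w0 x :: "real^'d::finite"
  assumes "norm (w - w0) \<le> d" "norm w0 \<le> R" "\<bar>b\<bar> \<le> e" "norm x \<le> 1"
  shows "\<bar>(w \<bullet> x + b) * lap_coef w b x - (w \<bullet> x + b) * lap_coef w0 b x\<bar>
    \<le> (4 * real CARD('d) + 36) * d * (R + e + d)\<^sup>2"
proof -
  define n where "n = real CARD('d)"
  define L where "L = R + e + d"
  have d: "d \<ge> 0" using assms(1) norm_ge_zero order_trans by blast
  have "norm w \<le> R + d" using norm_triangle_ineq[of w0 "w - w0"] assms(1,2) by simp
  then have new: "\<bar>w \<bullet> x\<bar> \<le> L" "\<bar>w \<bullet> x + b\<bar> \<le> L" "\<bar>w \<bullet> w\<bar> \<le> L\<^sup>2"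
    using neuron_inputs_le[of w "R + d" b e x] assms(3,4) by (simp_all add: L_def algebra_simps)
  have "R + e \<le> L" "R + e \<ge> 0" using d assms(2,3) norm_ge_zero[of w0] abs_ge_zero[of b]
    unfolding L_def by linarith+
  then have old: "\<bar>w0 \<bullet> x\<bar> \<le> L" "\<bar>w0 \<bullet> x + b\<bar> \<le> L" "\<bar>w0 \<bullet> w0\<bar> \<le> L\<^sup>2"
    using neuron_inputs_le[OF assms(2-4)] power_mono[of "R + e" L 2] by linarith+
  have "d * (2 * R + d) \<le> 2 * d * L"
    using d assms(3) mult_left_mono[of "2 * R + d" "2 * L" d] by (simp add: L_def algebra_simps)
  then have du: "\<bar>w \<bullet> x - w0 \<bullet> x\<bar> \<le> d" and ds: "\<bar>(w \<bullet> x + b) - (w0 \<bullet> x + b)\<bar> \<le> d"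
    and dq: "\<bar>w \<bullet> w - w0 \<bullet> w0\<bar> \<le> 2 * d * L"
    using neuron_inputs_diff_le[OF assms(1,2,4)] by simp_all
  have r: "\<bar>(norm x)\<^sup>2 - 1\<bar> \<le> 1" using assms(4) by (rule abs_norm_sq_minus_one_le)
  have n: "n \<ge> 0" by (simp add: n_def)
  have "\<bar>(w \<bullet> x + b) * lap_coef w b x - (w \<bullet> x + b) * lap_coef w0 b x\<bar> \<le> 2 * (2 * n + 18) * d * L\<^sup>2"
    unfolding lap_coef_def n_def[symmetric]
    by (rule abs_gated_diff_le[OF new(2) ds abs_lap_poly_le[OF n new(2,1,3) r]
          abs_lap_poly_le[OF n old(2,1,3) r] abs_lap_poly_diff_le[OF n new(2) old(2,1) ds du dq r]])
  then show ?thesis by (simp add: n_def L_def)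
qed

section \<open>Size of a function of class F\<close>

lemma Lam_eq_cbox:
  "Lam m al be = cbox (- (real m powr -al), - (\<chi> j. real m powr -be) :: real^'d::finite, - (real m powr -be))
                      (real m powr -al, (\<chi> j. real m powr -be), real m powr -be)"
  unfolding Lam_def cbox_Pair_eq
  by (auto simp: mem_box_cart abs_le_iff cbox_interval less_eq_vec_def; meson minus_le_iff)

lemma pdens_mult_measure_Lam:
  fixes \<theta> :: "real \<times> (real^'d::finite) \<times> real"
  assumes "m \<ge> 1" "\<theta> \<in> Lam m al be"
  shows "pdens m al be \<theta> * measure lborel (Lam m al be :: (real \<times> (real^'d) \<times> real) set) = 1"
proof -
  have "(0::real^'d) \<in> cbox (- (\<chi> j. real m powr -be)) (\<chi> j. real m powr -be)"
    by (simp add: mem_box_cart)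
  then have ne: "cbox (- (\<chi> j. real m powr -be)) (\<chi> j. real m powr -be :: real^'d) \<noteq> {}" by blast
  have "measure lborel (Lam m al be :: (real \<times> (real^'d) \<times> real) set)
      = (2 * real m powr -al) * (2 * real m powr -be) ^ (CARD('d) + 1)"
    unfolding Lam_eq_cbox content_Pair content_cbox_cart[OF ne] by (simp add: cbox_interval)
  then show ?thesis using assms by (simp add: pdens_def)
qed

lemma norm_rep_le_repnorm:
  fixes A :: "real \<times> (real^'d::finite) \<times> real \<Rightarrow> real^'d"
  assumes "A \<in> reps m al be f" "m \<ge> 1" "\<theta> \<in> Lam m al be"
  shows "norm (A \<theta>) \<le> repnorm m al be A * pdens m al be \<theta>"
proof -
  have p: "pdens m al be \<theta>' = pdens m al be \<theta>" "pdens m al be \<theta> > 0"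
    if "\<theta>' \<in> Lam m al be" for \<theta>' :: "real \<times> (real^'d) \<times> real"
    using that assms(2,3) by (simp_all add: pdens_def)
  obtain B where "\<And>\<theta>'. \<theta>' \<in> Lam m al be \<Longrightarrow> norm (A \<theta>') \<le> B"
    using assms(1) by (auto simp: reps_def bounded_iff)
  then have "norm (A \<theta>') / pdens m al be \<theta>' \<le> B / pdens m al be \<theta>" if "\<theta>' \<in> Lam m al be" for \<theta>'
    using p[OF that] that by (simp add: divide_right_mono)
  then have "bdd_above ((\<lambda>\<theta>'. norm (A \<theta>') / pdens m al be \<theta>') ` Lam m al be)"
    by (rule bdd_aboveI2)
  then have "norm (A \<theta>) / pdens m al be \<theta> \<le> repnorm m al be A"
    unfolding repnorm_def using assms(3) by (rule cSUP_upper2) simp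
  then show ?thesis using p[OF assms(3)] by (simp add: pos_divide_le_eq)
qed

lemma repnorm_nonneg:
  fixes A :: "real \<times> (real^'d::finite) \<times> real \<Rightarrow> real^'d"
  assumes "A \<in> reps m al be f" "m \<ge> 1"
  shows "repnorm m al be A \<ge> 0"
proof -
  have Lam0: "(0, 0, 0) \<in> (Lam m al be :: (real \<times> (real^'d) \<times> real) set)" by (simp add: Lam_def)
  have "0 \<le> repnorm m al be A * pdens m al be (0, 0 :: real^'d, 0)"
    by (rule order_trans[OF norm_ge_zero norm_rep_le_repnorm[OF assms Lam0]])
  moreover have "pdens m al be (0, 0 :: real^'d, 0) > 0" using Lam0 assms(2) by (simp add: pdens_def)
  ultimately show ?thesis by (simp add: zero_le_mult_iff)
qed

lemma norm_zeta_le: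
  fixes x :: "real^'d::finite"
  assumes "\<theta> \<in> Lam m al be" "x \<in> Gam"
  shows "norm (zeta x \<theta>)
    \<le> real m powr -al * ((2 * real CARD('d) + 18) * ((real CARD('d) + 1) * real m powr -be)\<^sup>2)"
proof -
  obtain a w b where \<theta>: "\<theta> = (a, w, b)" by (cases \<theta>)
  have "\<bar>a\<bar> \<le> real m powr -al" "\<bar>b\<bar> \<le> real m powr -be" "\<And>j. \<bar>w $ j\<bar> \<le> real m powr -be"
    using assms(1) by (auto simp: Lam_def \<theta>)
  moreover have "norm x \<le> 1" using assms(2) by (simp add: Gam_def)
  ultimately have "\<bar>a * lap_coef w b x\<bar> * norm x
      \<le> real m powr -al * ((2 * real CARD('d) + 18) * (real CARD('d) * real m powr -be + real m powr -be)\<^sup>2) * 1"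
    using abs_lap_coef_le[OF norm_le_card_mult[of w]] by (intro mult_mono abs_mult_le) simp_all
  then show ?thesis by (simp add: \<theta> zeta_eq_lap_coef algebra_simps)
qed

lemma abs_le_repnorm:
  fixes f :: "real^'d::finite \<Rightarrow> real"
  assumes A: "A \<in> reps m al be f" and m: "m \<ge> 1" and x: "x \<in> Gam"
  shows "\<bar>f x\<bar>
    \<le> repnorm m al be A * (real m powr -al * ((2 * real CARD('d) + 18) * ((real CARD('d) + 1) * real m powr -be)\<^sup>2))"
    (is "_ \<le> repnorm m al be A * ?Z")
proof -
  let ?p = "pdens m al be (0, 0 :: real^'d, 0)"
  have Lam0: "(0, 0, 0) \<in> (Lam m al be :: (real \<times> (real^'d) \<times> real) set)" by (simp add: Lam_def)
  have p: "pdens m al be \<theta> = ?p" if "\<theta> \<in> Lam m al be" for \<theta> :: "real \<times> (real^'d) \<times> real"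
    using that Lam0 by (simp add: pdens_def)
  have "?p > 0" using Lam0 m by (simp add: pdens_def)
  have "((\<lambda>\<theta>. A \<theta> \<bullet> zeta x \<theta>) has_integral f x) (Lam m al be)"
    using A x by (simp add: reps_def)
  moreover have "norm (A \<theta> \<bullet> zeta x \<theta>) \<le> repnorm m al be A * ?p * ?Z" if "\<theta> \<in> Lam m al be" for \<theta>
    using that norm_rep_le_repnorm[OF A m that] norm_zeta_le[OF that x] repnorm_nonneg[OF A m] \<open>?p > 0\<close>
    unfolding real_norm_def p[OF that]
    by (intro order_trans[OF Cauchy_Schwarz_ineq2] mult_mono) simp_all
  ultimately have "norm (f x) \<le> repnorm m al be A * ?p * ?Z * measure lborel (Lam m al be :: (real \<times> (real^'d) \<times> real) set)"
    unfolding Lam_eq_cbox by (rule has_integral_bound[rotated]) (auto simp: repnorm_nonneg[OF A m] pdens_def)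
  also have "\<dots> = repnorm m al be A * ?Z * (?p * measure lborel (Lam m al be :: (real \<times> (real^'d) \<times> real) set))"
    by (simp only: ac_simps)
  finally show ?thesis using pdens_mult_measure_Lam[OF m Lam0] by simp
qed

lemma abs_le_repnorm_cube:
  fixes f :: "real^'d::finite \<Rightarrow> real"
  assumes "A \<in> reps m al be f" "repnorm m al be A = nf" "m \<ge> 1" "x \<in> Gam" "6 * real CARD('d) + 54 \<le> c"
  shows "\<bar>f x\<bar> \<le> c ^ 3 * (real m powr -al * (real m powr -be)\<^sup>2 * nf)"
proof -
  have "nf \<ge> 0" using repnorm_nonneg[OF assms(1,3)] assms(2) by simp
  then have "nf * (real m powr -al * ((2 * real CARD('d) + 18) * ((real CARD('d) + 1) * real m powr -be)\<^sup>2))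
      \<le> nf * (real m powr -al * (c * (c * real m powr -be)\<^sup>2))"
    using assms(5) by (intro mult_left_mono mult_mono power_mono) auto
  then show ?thesis
    using abs_le_repnorm[OF assms(1,3,4)] assms(2) by (simp add: algebra_simps power2_eq_square power3_eq_cube)
qed

lemma norm_grad_direction_le:
  fixes w x :: "'a::real_normed_vector"
  assumes n: "n \<ge> 0" and sL: "\<bar>s\<bar> \<le> L" and uL: "\<bar>u\<bar> \<le> L" and qL: "\<bar>q\<bar> \<le> L\<^sup>2" and r: "\<bar>r\<bar> \<le> 1"
    and x: "norm x \<le> 1" and wL: "norm w \<le> L"
  shows "norm ((6 * n * s\<^sup>2 + 24 * s * u + 12 * s\<^sup>2 + 6 * q * r) *\<^sub>R x + (12 * s * r) *\<^sub>R w)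
    \<le> (6 * n + 54) * L\<^sup>2"
proof -
  have "\<bar>s\<^sup>2\<bar> \<le> L\<^sup>2" "\<bar>s * u\<bar> \<le> L\<^sup>2" "\<bar>q * r\<bar> \<le> L\<^sup>2"
    using abs_mult_le[OF sL sL] abs_mult_le[OF sL uL] abs_mult_le[OF qL r] by (simp_all add: power2_eq_square)
  then have "\<bar>6 * n * s\<^sup>2\<bar> \<le> 6 * n * L\<^sup>2" "\<bar>24 * s * u\<bar> \<le> 24 * L\<^sup>2"
    "\<bar>12 * s\<^sup>2\<bar> \<le> 12 * L\<^sup>2" "\<bar>6 * q * r\<bar> \<le> 6 * L\<^sup>2"
    using mult_left_mono[of "\<bar>s\<^sup>2\<bar>" "L\<^sup>2" "6 * n"] n by (simp_all add: abs_mult mult.assoc)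
  then have "\<bar>6 * n * s\<^sup>2 + 24 * s * u + 12 * s\<^sup>2 + 6 * q * r\<bar> \<le> (6 * n + 42) * L\<^sup>2"
    using abs_triangle_ineq[of "6 * n * s\<^sup>2 + 24 * s * u + 12 * s\<^sup>2" "6 * q * r"]
      abs_triangle_ineq[of "6 * n * s\<^sup>2 + 24 * s * u" "12 * s\<^sup>2"] abs_triangle_ineq[of "6 * n * s\<^sup>2" "24 * s * u"]
    by (simp add: algebra_simps)
  then have "norm ((6 * n * s\<^sup>2 + 24 * s * u + 12 * s\<^sup>2 + 6 * q * r) *\<^sub>R x) \<le> (6 * n + 42) * L\<^sup>2 * 1"
    unfolding norm_scaleR using x n by (intro mult_mono) auto
  moreover have "norm ((12 * s * r) *\<^sub>R w) \<le> (12 * L) * L"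
    unfolding norm_scaleR using abs_mult_le[OF sL r] wL order_trans[OF norm_ge_zero wL]
    by (intro mult_mono) (auto simp: abs_mult)
  ultimately show ?thesis
    using norm_triangle_ineq[of "(6 * n * s\<^sup>2 + 24 * s * u + 12 * s\<^sup>2 + 6 * q * r) *\<^sub>R x" "(12 * s * r) *\<^sub>R w"]
    by (simp add: power2_eq_square algebra_simps)
qed

lemma norm_grad_psi_le:
  fixes W :: "nat \<Rightarrow> real^'d::finite"
  assumes "norm (W i) \<le> R" "\<bar>b i\<bar> \<le> e" "norm x \<le> 1"
  shows "norm (grad_psi m a b f W x i)
    \<le> 2 * (\<bar>psi m a b W x\<bar> + \<bar>f x\<bar>) * \<bar>a i\<bar> * ((6 * real CARD('d) + 54) * (R + e)\<^sup>2)"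
proof -
  define s where "s = W i \<bullet> x + b i"
  have "\<bar>2 * (psi m a b W x - f x) * a i * (if s \<ge> 0 then 1 else 0)\<bar>
      \<le> 2 * (\<bar>psi m a b W x\<bar> + \<bar>f x\<bar>) * \<bar>a i\<bar>"
    by (simp add: abs_mult mult_right_mono)
  moreover have "norm ((6 * real CARD('d) * s\<^sup>2 + 24 * s * (W i \<bullet> x) + 12 * s\<^sup>2 + 6 * (W i \<bullet> W i) * ((norm x)\<^sup>2 - 1)) *\<^sub>R x
      + (12 * s * ((norm x)\<^sup>2 - 1)) *\<^sub>R W i) \<le> (6 * real CARD('d) + 54) * (R + e)\<^sup>2"
    using neuron_inputs_le[OF assms] abs_norm_sq_minus_one_le[OF assms(3)] assms(3)
    by (intro norm_grad_direction_le) (auto simp: s_def)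
  ultimately show ?thesis
    unfolding grad_psi_def Let_def norm_scaleR s_def[symmetric] by (intro mult_mono) simp_all
qed

lemma norm_grad_pseudo_le:
  fixes W0 :: "nat \<Rightarrow> real^'d::finite"
  assumes "norm (W0 i) \<le> R" "\<bar>b i\<bar> \<le> e" "norm x \<le> 1"
  shows "norm (grad_pseudo m a b f W0 W x i)
    \<le> 2 * (\<bar>pseudo m a b W0 W x\<bar> + \<bar>f x\<bar>) * \<bar>a i\<bar> * ((2 * real CARD('d) + 18) * (R + e)\<^sup>2)"
proof -
  have "\<bar>2 * (pseudo m a b W0 W x - f x) * a i\<bar> \<le> 2 * (\<bar>pseudo m a b W0 W x\<bar> + \<bar>f x\<bar>) * \<bar>a i\<bar>"
    by (simp add: abs_mult mult_right_mono)
  then have "\<bar>2 * (pseudo m a b W0 W x - f x) * a i * lap_coef (W0 i) (b i) x\<bar> * norm x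
      \<le> 2 * (\<bar>pseudo m a b W0 W x\<bar> + \<bar>f x\<bar>) * \<bar>a i\<bar> * ((2 * real CARD('d) + 18) * (R + e)\<^sup>2) * 1"
    using abs_lap_coef_le[OF assms] assms(3) by (intro mult_mono abs_mult_le) simp_all
  then show ?thesis by (simp add: grad_pseudo_eq_lap_coef)
qed

lemma norm_grad_psi_le_bounded:
  fixes W :: "nat \<Rightarrow> real^'d::finite"
  assumes "K \<ge> 1" "6 * real CARD('d) + 54 \<le> c" "\<bar>a i\<bar> \<le> A0" "\<bar>b i\<bar> \<le> e" "e \<le> 1"
    "norm (W i) \<le> K" "\<bar>psi m a b W x\<bar> \<le> K" "norm x \<le> 1" "\<bar>f x\<bar> \<le> c ^ 3 * Z" "Z \<ge> 0"
  shows "norm (grad_psi m a b f W x i) \<le> 2 * c ^ 4 * (K + 1) ^ 3 * A0 * (Z + 1)"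
proof -
  have c: "c \<ge> 1" using assms(2) by simp
  then have "1 \<le> c ^ 3" by simp
  then have "K \<le> c ^ 3 * K" using assms(1) by simp
  moreover have "0 \<le> c ^ 3 * K * Z" using assms(1,10) c by simp
  moreover have "c ^ 3 * ((K + 1) * (Z + 1)) = c ^ 3 * K * Z + c ^ 3 * K + c ^ 3 * Z + c ^ 3"
    by (simp add: algebra_simps)
  ultimately have "\<bar>psi m a b W x\<bar> + \<bar>f x\<bar> \<le> c ^ 3 * ((K + 1) * (Z + 1))"
    using assms(7,9) \<open>1 \<le> c ^ 3\<close> by linarith
  then have "2 * (\<bar>psi m a b W x\<bar> + \<bar>f x\<bar>) * \<bar>a i\<bar> \<le> 2 * (c ^ 3 * ((K + 1) * (Z + 1))) * A0"
    using assms(3) c by (intro mult_mono) auto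
  moreover have "(6 * real CARD('d) + 54) * (K + e)\<^sup>2 \<le> c * (K + 1)\<^sup>2"
    using assms(1,2,4,5) by (intro mult_mono power_mono) auto
  ultimately have "2 * (\<bar>psi m a b W x\<bar> + \<bar>f x\<bar>) * \<bar>a i\<bar> * ((6 * real CARD('d) + 54) * (K + e)\<^sup>2)
      \<le> 2 * (c ^ 3 * ((K + 1) * (Z + 1))) * A0 * (c * (K + 1)\<^sup>2)"
    by (rule mult_mono) (use assms(1,10) order_trans[OF abs_ge_zero assms(3)] c in auto)
  also have "\<dots> = 2 * c ^ 4 * (K + 1) ^ 3 * A0 * (Z + 1)"
    by (simp add: algebra_simps power2_eq_square power3_eq_cube eval_nat_numeral)
  finally show ?thesis using norm_grad_psi_le[of W i K b e x m a f, OF assms(6,4,8)] by linarith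
qed

lemma abs_sum_le_card_mult:
  fixes h :: "nat \<Rightarrow> real"
  assumes "\<And>i. i \<in> {1..m} \<Longrightarrow> \<bar>h i\<bar> \<le> B"
  shows "\<bar>\<Sum>i\<in>{1..m}. h i\<bar> \<le> real m * B"
  using order_trans[OF sum_abs sum_bounded_above[of "{1..m}" "\<lambda>i. \<bar>h i\<bar>" B]] assms by simp

lemma neuron_radius_le:
  fixes w w0 :: "real^'d::finite"
  assumes "\<forall>j. \<bar>w0 $ j\<bar> \<le> e" "\<bar>b\<bar> \<le> e" "norm (w - w0) \<le> D" "6 * real CARD('d) + 54 \<le> c"
  shows "norm w0 \<le> real CARD('d) * e" "norm w \<le> real CARD('d) * e + D"
    "real CARD('d) * e + e \<le> c * e" "real CARD('d) * e + D + e \<le> c * e + D"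
    "0 \<le> real CARD('d) * e + e" "0 \<le> D"
proof -
  show w0: "norm w0 \<le> real CARD('d) * e" using assms(1) by (simp add: norm_le_card_mult)
  then show "norm w \<le> real CARD('d) * e + D"
    using norm_triangle_ineq[of w0 "w - w0"] assms(3) by simp
  have "e \<ge> 0" using assms(2) by linarith
  then show "real CARD('d) * e + e \<le> c * e" "real CARD('d) * e + D + e \<le> c * e + D"
    "0 \<le> real CARD('d) * e + e"
    using mult_right_mono[of "real CARD('d) + 1" c e] assms(4) by (simp_all add: algebra_simps)
  show "0 \<le> D" using assms(3) norm_ge_zero order_trans by blast
qed

lemma abs_psi_minus_pseudo_le:
  fixes W w0 :: "nat \<Rightarrow> real^'d::finite"
  assumes init: "\<forall>i\<in>{1..m}. \<bar>a i\<bar> \<le> A0 \<and> (\<forall>j. \<bar>w0 i $ j\<bar> \<le> e) \<and> \<bar>b i\<bar> \<le> e"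
    and drift: "\<forall>i\<in>{1..m}. norm (W i - w0 i) \<le> D"
    and x: "norm x \<le> 1" and c: "6 * real CARD('d) + 54 \<le> c"
  shows "\<bar>psi m a b W x - pseudo m a b w0 W x\<bar> \<le> real m * (A0 * (c * D * (c * e + D)\<^sup>2))"
  unfolding psi_eq_sum_lap_coef pseudo_eq_sum_lap_coef sum_subtractf[symmetric]
proof (rule abs_sum_le_card_mult)
  fix i assume i: "i \<in> {1..m}"
  have ai: "\<bar>a i\<bar> \<le> A0" and w0i: "\<forall>j. \<bar>w0 i $ j\<bar> \<le> e" and bi: "\<bar>b i\<bar> \<le> e"
    and Wi: "norm (W i - w0 i) \<le> D"
    using init drift i by auto
  note r = neuron_radius_le[OF w0i bi Wi c]
  have "\<bar>(W i \<bullet> x + b i) * lap_coef (W i) (b i) x - (W i \<bullet> x + b i) * lap_coef (w0 i) (b i) x\<bar>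
      \<le> (4 * real CARD('d) + 36) * D * (real CARD('d) * e + e + D)\<^sup>2"
    by (rule abs_lap_coef_diff_le[OF Wi r(1) bi x])
  also have "\<dots> \<le> c * D * (c * e + D)\<^sup>2"
    using r c by (intro mult_mono power_mono) auto
  finally have "\<bar>a i * ((W i \<bullet> x + b i) * lap_coef (W i) (b i) x - (W i \<bullet> x + b i) * lap_coef (w0 i) (b i) x)\<bar>
      \<le> A0 * (c * D * (c * e + D)\<^sup>2)"
    by (rule abs_mult_le[OF ai])
  then show "\<bar>a i * (W i \<bullet> x + b i) * lap_coef (W i) (b i) x - a i * (W i \<bullet> x + b i) * lap_coef (w0 i) (b i) x\<bar>
      \<le> A0 * (c * D * (c * e + D)\<^sup>2)"
    by (simp add: algebra_simps)
qed

lemma abs_psi_le: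
  fixes W w0 :: "nat \<Rightarrow> real^'d::finite"
  assumes init: "\<forall>i\<in>{1..m}. \<bar>a i\<bar> \<le> A0 \<and> (\<forall>j. \<bar>w0 i $ j\<bar> \<le> e) \<and> \<bar>b i\<bar> \<le> e"
    and drift: "\<forall>i\<in>{1..m}. norm (W i - w0 i) \<le> D"
    and x: "norm x \<le> 1" and c: "6 * real CARD('d) + 54 \<le> c"
  shows "\<bar>psi m a b W x\<bar> \<le> real m * (A0 * (c * (c * e + D) ^ 3))"
  unfolding psi_eq_sum_lap_coef
proof (rule abs_sum_le_card_mult)
  fix i assume i: "i \<in> {1..m}"
  have ai: "\<bar>a i\<bar> \<le> A0" and w0i: "\<forall>j. \<bar>w0 i $ j\<bar> \<le> e" and bi: "\<bar>b i\<bar> \<le> e"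
    and Wi: "norm (W i - w0 i) \<le> D"
    using init drift i by auto
  note r = neuron_radius_le[OF w0i bi Wi c]
  have "\<bar>W i \<bullet> x + b i\<bar> \<le> c * e + D"
    using neuron_inputs_le(2)[OF r(2) bi x] r(4) by linarith
  moreover have "\<bar>lap_coef (W i) (b i) x\<bar> \<le> c * (c * e + D)\<^sup>2"
    using r c by (intro order_trans[OF abs_lap_coef_le[OF r(2) bi x]] mult_mono power_mono) auto
  ultimately have "\<bar>a i * ((W i \<bullet> x + b i) * lap_coef (W i) (b i) x)\<bar> \<le> A0 * ((c * e + D) * (c * (c * e + D)\<^sup>2))"
    using ai by (intro abs_mult_le)
  then show "\<bar>a i * (W i \<bullet> x + b i) * lap_coef (W i) (b i) x\<bar> \<le> A0 * (c * (c * e + D) ^ 3)"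
    by (simp add: algebra_simps power2_eq_square power3_eq_cube)
qed

lemma abs_pseudo_le:
  fixes W w0 :: "nat \<Rightarrow> real^'d::finite"
  assumes init: "\<forall>i\<in>{1..m}. \<bar>a i\<bar> \<le> A0 \<and> (\<forall>j. \<bar>w0 i $ j\<bar> \<le> e) \<and> \<bar>b i\<bar> \<le> e"
    and drift: "\<forall>i\<in>{1..m}. norm (W i - w0 i) \<le> D"
    and x: "norm x \<le> 1" and c: "6 * real CARD('d) + 54 \<le> c"
  shows "\<bar>pseudo m a b w0 W x\<bar> \<le> real m * (A0 * (c * (c * e)\<^sup>2 * (c * e + D)))"
  unfolding pseudo_eq_sum_lap_coef
proof (rule abs_sum_le_card_mult)
  fix i assume i: "i \<in> {1..m}"
  have ai: "\<bar>a i\<bar> \<le> A0" and w0i: "\<forall>j. \<bar>w0 i $ j\<bar> \<le> e" and bi: "\<bar>b i\<bar> \<le> e"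
    and Wi: "norm (W i - w0 i) \<le> D"
    using init drift i by auto
  note r = neuron_radius_le[OF w0i bi Wi c]
  have "\<bar>W i \<bullet> x + b i\<bar> \<le> c * e + D"
    using neuron_inputs_le(2)[OF r(2) bi x] r(4) by linarith
  moreover have "\<bar>lap_coef (w0 i) (b i) x\<bar> \<le> c * (c * e)\<^sup>2"
    using r c by (intro order_trans[OF abs_lap_coef_le[OF r(1) bi x]] mult_mono power_mono) auto
  ultimately have "\<bar>a i * ((W i \<bullet> x + b i) * lap_coef (w0 i) (b i) x)\<bar> \<le> A0 * ((c * e + D) * (c * (c * e)\<^sup>2))"
    using ai by (intro abs_mult_le)
  then show "\<bar>a i * (W i \<bullet> x + b i) * lap_coef (w0 i) (b i) x\<bar> \<le> A0 * (c * (c * e)\<^sup>2 * (c * e + D))"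
    by (simp add: algebra_simps)
qed

lemma norm21_grad_diff_le:
  fixes W w0 :: "nat \<Rightarrow> real^'d::finite"
  assumes init: "\<forall>i\<in>{1..m}. \<bar>a i\<bar> \<le> A0 \<and> (\<forall>j. \<bar>w0 i $ j\<bar> \<le> e) \<and> \<bar>b i\<bar> \<le> e"
    and drift: "\<forall>i\<in>{1..m}. norm (W i - w0 i) \<le> D"
    and x: "norm x \<le> 1" and c: "6 * real CARD('d) + 54 \<le> c"
  shows "norm21 m (\<lambda>i. grad_psi m a b f W x i - grad_pseudo m a b f w0 W x i)
    \<le> real m * (2 * (\<bar>psi m a b W x\<bar> + \<bar>f x\<bar>) * A0 * (c * (c * e + D)\<^sup>2)
      + 2 * (\<bar>pseudo m a b w0 W x\<bar> + \<bar>f x\<bar>) * A0 * (c * (c * e)\<^sup>2))"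
proof -
  let ?B = "2 * (\<bar>psi m a b W x\<bar> + \<bar>f x\<bar>) * A0 * (c * (c * e + D)\<^sup>2)
      + 2 * (\<bar>pseudo m a b w0 W x\<bar> + \<bar>f x\<bar>) * A0 * (c * (c * e)\<^sup>2)"
  have "norm (grad_psi m a b f W x i - grad_pseudo m a b f w0 W x i) \<le> ?B" if i: "i \<in> {1..m}" for i
  proof -
    have ai: "\<bar>a i\<bar> \<le> A0" and w0i: "\<forall>j. \<bar>w0 i $ j\<bar> \<le> e" and bi: "\<bar>b i\<bar> \<le> e"
      and Wi: "norm (W i - w0 i) \<le> D"
      using init drift i by auto
    note r = neuron_radius_le[OF w0i bi Wi c]
    have "norm (grad_psi m a b f W x i) \<le> 2 * (\<bar>psi m a b W x\<bar> + \<bar>f x\<bar>) * A0 * (c * (c * e + D)\<^sup>2)"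
      using r c ai
      by (intro order_trans[OF norm_grad_psi_le[of W i _ b e x m a f, OF r(2) bi x]] mult_mono power_mono) auto
    moreover have "norm (grad_pseudo m a b f w0 W x i) \<le> 2 * (\<bar>pseudo m a b w0 W x\<bar> + \<bar>f x\<bar>) * A0 * (c * (c * e)\<^sup>2)"
      using r c ai
      by (intro order_trans[OF norm_grad_pseudo_le[of w0 i _ b e x m a f W, OF r(1) bi x]] mult_mono power_mono) auto
    ultimately show ?thesis
      using norm_triangle_ineq4[of "grad_psi m a b f W x i" "grad_pseudo m a b f w0 W x i"] by linarith
  qed
  then show ?thesis
    unfolding norm21_def using sum_bounded_above[of "{1..m}" _ ?B] by simp
qed

lemma psi_gap_poly_le:
  fixes M A0 e \<delta> \<kappa> :: real
  assumes "M \<ge> 0" "A0 \<ge> 0" "e \<ge> 0" "\<delta> \<ge> 0" "\<kappa> \<ge> 0"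
  shows "M * (A0 * (\<kappa> * (\<kappa> * \<delta>) * (\<kappa> * e + \<kappa> * \<delta>)\<^sup>2)) \<le> 4 * \<kappa> ^ 4 * (M * A0 * \<delta> ^ 3 + M * A0 * e\<^sup>2 * \<delta>)"
proof -
  have "M * (A0 * (\<kappa> * (\<kappa> * \<delta>) * (\<kappa> * e + \<kappa> * \<delta>)\<^sup>2)) = \<kappa> ^ 4 * (M * A0 * \<delta>) * (e + \<delta>)\<^sup>2"
    by (simp add: algebra_simps power2_eq_square power4_eq_xxxx)
  also have "\<dots> \<le> \<kappa> ^ 4 * (M * A0 * \<delta>) * (2\<^sup>2 * (e\<^sup>2 + \<delta>\<^sup>2))"
    using assms by (intro mult_left_mono add_power_le_two_power) auto
  also have "\<dots> = 4 * \<kappa> ^ 4 * (M * A0 * \<delta> ^ 3 + M * A0 * e\<^sup>2 * \<delta>)"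
    by (simp add: algebra_simps power2_eq_square power3_eq_cube)
  finally show ?thesis .
qed

lemma grad_gap_poly_le:
  fixes M A0 e \<delta> Z \<kappa> P G F :: real
  assumes "M \<ge> 0" "A0 \<ge> 0" "e \<ge> 0" "\<delta> \<ge> 0" "Z \<ge> 0" "\<kappa> \<ge> 1"
    and P: "P \<le> M * (A0 * (\<kappa> * (\<kappa> * e + \<kappa> * \<delta>) ^ 3))"
    and G: "G \<le> M * (A0 * (\<kappa> * (\<kappa> * e)\<^sup>2 * (\<kappa> * e + \<kappa> * \<delta>)))"
    and F: "F \<le> \<kappa> ^ 3 * Z"
  shows "M * (2 * (P + F) * A0 * (\<kappa> * (\<kappa> * e + \<kappa> * \<delta>)\<^sup>2) + 2 * (G + F) * A0 * (\<kappa> * (\<kappa> * e)\<^sup>2))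
    \<le> 66 * \<kappa> ^ 7 * ((M * A0)\<^sup>2 * \<delta> ^ 5 + M * A0 * Z * \<delta>\<^sup>2 + (M * A0)\<^sup>2 * e ^ 4 * \<delta>
      + (M * A0)\<^sup>2 * e ^ 5 + M * A0 * Z * e\<^sup>2)"
proof -
  define X where "X = M * A0"
  define l where "l = e + \<delta>"
  have X: "X \<ge> 0" and l: "l \<ge> 0" using assms by (simp_all add: X_def l_def)
  have kl: "\<kappa> * e + \<kappa> * \<delta> = \<kappa> * l" by (simp add: l_def algebra_simps)
  have "M * (2 * (P + F) * A0 * (\<kappa> * (\<kappa> * l)\<^sup>2) + 2 * (G + F) * A0 * (\<kappa> * (\<kappa> * e)\<^sup>2))
      \<le> M * (2 * (M * (A0 * (\<kappa> * (\<kappa> * l) ^ 3)) + \<kappa> ^ 3 * Z) * A0 * (\<kappa> * (\<kappa> * l)\<^sup>2)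
        + 2 * (M * (A0 * (\<kappa> * (\<kappa> * e)\<^sup>2 * (\<kappa> * l))) + \<kappa> ^ 3 * Z) * A0 * (\<kappa> * (\<kappa> * e)\<^sup>2))"
    using assms unfolding kl by (intro mult_left_mono add_mono mult_right_mono) auto
  also have "\<dots> = 2 * \<kappa> ^ 7 * X\<^sup>2 * l ^ 5 + 2 * \<kappa> ^ 6 * X * Z * l\<^sup>2
      + 2 * \<kappa> ^ 7 * X\<^sup>2 * e ^ 4 * l + 2 * \<kappa> ^ 6 * X * Z * e\<^sup>2"
    by (simp add: X_def algebra_simps eval_nat_numeral)
  also have "\<dots> \<le> 2 * \<kappa> ^ 7 * X\<^sup>2 * (2 ^ 5 * (e ^ 5 + \<delta> ^ 5)) + 2 * \<kappa> ^ 7 * X * Z * (2\<^sup>2 * (e\<^sup>2 + \<delta>\<^sup>2))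
      + 2 * \<kappa> ^ 7 * X\<^sup>2 * e ^ 4 * l + 2 * \<kappa> ^ 7 * X * Z * e\<^sup>2"
  proof -
    have "\<kappa> ^ 6 \<le> \<kappa> ^ 7" using assms(6) by (intro power_increasing) auto
    then have k: "2 * \<kappa> ^ 6 * X * Z \<le> 2 * \<kappa> ^ 7 * X * Z" using X assms(5) by (simp add: mult_right_mono)
    have "2 * \<kappa> ^ 7 * X\<^sup>2 * l ^ 5 \<le> 2 * \<kappa> ^ 7 * X\<^sup>2 * (2 ^ 5 * (e ^ 5 + \<delta> ^ 5))"
      using assms unfolding l_def by (intro mult_left_mono add_power_le_two_power) auto
    moreover have "2 * \<kappa> ^ 6 * X * Z * l\<^sup>2 \<le> 2 * \<kappa> ^ 7 * X * Z * (2\<^sup>2 * (e\<^sup>2 + \<delta>\<^sup>2))"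
      unfolding l_def by (rule mult_mono[OF k add_power_le_two_power]) (use assms X in auto)
    moreover have "2 * \<kappa> ^ 6 * X * Z * e\<^sup>2 \<le> 2 * \<kappa> ^ 7 * X * Z * e\<^sup>2"
      using k by (simp add: mult_right_mono)
    ultimately show ?thesis by linarith
  qed
  also have "\<dots> = \<kappa> ^ 7 * (64 * (X\<^sup>2 * \<delta> ^ 5) + 8 * (X * Z * \<delta>\<^sup>2) + 2 * (X\<^sup>2 * e ^ 4 * \<delta>)
      + 66 * (X\<^sup>2 * e ^ 5) + 10 * (X * Z * e\<^sup>2))"
    by (simp add: l_def algebra_simps eval_nat_numeral)
  also have "\<dots> \<le> \<kappa> ^ 7 * (66 * (X\<^sup>2 * \<delta> ^ 5 + X * Z * \<delta>\<^sup>2 + X\<^sup>2 * e ^ 4 * \<delta> + X\<^sup>2 * e ^ 5 + X * Z * e\<^sup>2))"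
    using assms X by (intro mult_left_mono) auto
  finally show ?thesis unfolding kl by (simp add: X_def algebra_simps)
qed

lemma powr_diff_mult_eq:
  fixes M al be :: real
  assumes "M > 0"
  shows "M powr (real c - real k * al - real l * be) = M ^ c * (M powr -al) ^ k * (M powr -be) ^ l"
  using assms by (simp add: powr_diff powr_minus powr_realpow powr_power[symmetric]
      divide_inverse power_inverse)

lemma powr_eq_monomials:
  fixes M al be A0 e :: real
  assumes "M > 0" "A0 = M powr -al" "e = M powr -be"
  shows "M powr (1 - 4 * al) = M * A0 ^ 4" "M powr (1 - 2 * al - 2 * be) = M * A0\<^sup>2 * e\<^sup>2"
    "M powr (2 - 7 * al) = M\<^sup>2 * A0 ^ 7" "M powr (1 - 4 * al - 2 * be) = M * A0 ^ 4 * e\<^sup>2"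
    "M powr (2 - 3 * al - 4 * be) = M\<^sup>2 * A0 ^ 3 * e ^ 4" "M powr (2 - 2 * al - 5 * be) = M\<^sup>2 * A0\<^sup>2 * e ^ 5"
    "M powr (1 - 2 * al - 4 * be) = M * A0\<^sup>2 * e ^ 4"
  using powr_diff_mult_eq[OF assms(1), of 1 4 al 0 be] powr_diff_mult_eq[OF assms(1), of 1 2 al 2 be]
    powr_diff_mult_eq[OF assms(1), of 2 7 al 0 be] powr_diff_mult_eq[OF assms(1), of 1 4 al 2 be]
    powr_diff_mult_eq[OF assms(1), of 2 3 al 4 be] powr_diff_mult_eq[OF assms(1), of 2 2 al 5 be]
    powr_diff_mult_eq[OF assms(1), of 1 2 al 4 be]
  unfolding assms(2,3)[symmetric]
  by (simp_all only: of_nat_numeral of_nat_1 of_nat_0 mult_zero_left diff_zero power_one_right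
      power_0 mult_1_right)

lemma powr_monomials:
  fixes M al be A0 e \<eta> t \<rho> nf :: real
  assumes "M > 0" "A0 = M powr -al" "e = M powr -be"
  shows "M * A0 * (\<eta> * t * A0 * \<rho>) ^ 3 = \<eta> ^ 3 * t ^ 3 * M powr (1 - 4 * al) * \<rho> ^ 3"
    "M * A0 * e\<^sup>2 * (\<eta> * t * A0 * \<rho>) = \<eta> * t * M powr (1 - 2 * al - 2 * be) * \<rho>"
    "(M * A0)\<^sup>2 * (\<eta> * t * A0 * \<rho>) ^ 5 = \<eta> ^ 5 * t ^ 5 * M powr (2 - 7 * al) * \<rho> ^ 5"
    "M * A0 * (A0 * e\<^sup>2 * nf) * (\<eta> * t * A0 * \<rho>)\<^sup>2 = \<eta>\<^sup>2 * t\<^sup>2 * M powr (1 - 4 * al - 2 * be) * nf * \<rho>\<^sup>2"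
    "(M * A0)\<^sup>2 * e ^ 4 * (\<eta> * t * A0 * \<rho>) = \<eta> * t * M powr (2 - 3 * al - 4 * be) * \<rho>"
    "(M * A0)\<^sup>2 * e ^ 5 = M powr (2 - 2 * al - 5 * be)"
    "M * A0 * (A0 * e\<^sup>2 * nf) * e\<^sup>2 = M powr (1 - 2 * al - 4 * be) * nf"
  using powr_eq_monomials[OF assms] by (simp_all add: power_mult_distrib eval_nat_numeral)

lemma abs_psi_minus_pseudo_le_powr:
  fixes W w0 :: "nat \<Rightarrow> real^'d::finite"
  assumes init: "\<forall>i\<in>{1..m}. \<bar>a i\<bar> \<le> real m powr -al \<and> (\<forall>j. \<bar>w0 i $ j\<bar> \<le> real m powr -be)
      \<and> \<bar>b i\<bar> \<le> real m powr -be"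
    and drift: "\<forall>i\<in>{1..m}. norm (W i - w0 i) \<le> \<kappa> * (\<eta> * t * real m powr -al * \<rho>)"
    and x: "norm x \<le> 1" and \<kappa>: "6 * real CARD('d) + 54 \<le> \<kappa>"
    and "m \<ge> 1" "\<eta> \<ge> 0" "t \<ge> 0" "\<rho> \<ge> 0"
  shows "\<bar>psi m a b W x - pseudo m a b w0 W x\<bar>
    \<le> 4 * \<kappa> ^ 4 * (\<eta> ^ 3 * t ^ 3 * real m powr (1 - 4 * al) * \<rho> ^ 3
      + \<eta> * t * real m powr (1 - 2 * al - 2 * be) * \<rho>)"
proof -
  define A0 where "A0 = real m powr -al"
  define e where "e = real m powr -be"
  define \<delta> where "\<delta> = \<eta> * t * A0 * \<rho>"
  have \<delta>: "\<delta> \<ge> 0" using assms(6-8) by (simp add: \<delta>_def A0_def)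
  have M: "real m > 0" using assms(5) by simp
  have "\<bar>psi m a b W x - pseudo m a b w0 W x\<bar> \<le> real m * (A0 * (\<kappa> * (\<kappa> * \<delta>) * (\<kappa> * e + \<kappa> * \<delta>)\<^sup>2))"
    using abs_psi_minus_pseudo_le[OF _ _ x \<kappa>] init drift by (simp add: A0_def e_def \<delta>_def)
  also have "\<dots> \<le> 4 * \<kappa> ^ 4 * (real m * A0 * \<delta> ^ 3 + real m * A0 * e\<^sup>2 * \<delta>)"
    using \<delta> \<kappa> by (intro psi_gap_poly_le) (auto simp: A0_def e_def)
  finally show ?thesis
    by (simp only: \<delta>_def powr_monomials[OF M A0_def e_def])
qed

lemma norm21_grad_diff_le_powr:
  fixes W w0 :: "nat \<Rightarrow> real^'d::finite"
  assumes init: "\<forall>i\<in>{1..m}. \<bar>a i\<bar> \<le> real m powr -al \<and> (\<forall>j. \<bar>w0 i $ j\<bar> \<le> real m powr -be)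
      \<and> \<bar>b i\<bar> \<le> real m powr -be"
    and drift: "\<forall>i\<in>{1..m}. norm (W i - w0 i) \<le> \<kappa> * (\<eta> * t * real m powr -al * \<rho>)"
    and x: "norm x \<le> 1" and \<kappa>: "6 * real CARD('d) + 54 \<le> \<kappa>"
    and f: "\<bar>f x\<bar> \<le> \<kappa> ^ 3 * (real m powr -al * (real m powr -be)\<^sup>2 * nf)"
    and "m \<ge> 1" "\<eta> \<ge> 0" "t \<ge> 0" "\<rho> \<ge> 0" "nf \<ge> 0"
  shows "norm21 m (\<lambda>k. grad_psi m a b f W x k - grad_pseudo m a b f w0 W x k)
    \<le> 66 * \<kappa> ^ 7 * (\<eta> ^ 5 * t ^ 5 * real m powr (2 - 7 * al) * \<rho> ^ 5
      + \<eta>\<^sup>2 * t\<^sup>2 * real m powr (1 - 4 * al - 2 * be) * nf * \<rho>\<^sup>2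
      + \<eta> * t * real m powr (2 - 3 * al - 4 * be) * \<rho>
      + real m powr (2 - 2 * al - 5 * be)
      + real m powr (1 - 2 * al - 4 * be) * nf)"
proof -
  define M where "M = real m"
  define A0 where "A0 = M powr -al"
  define e where "e = M powr -be"
  define \<delta> where "\<delta> = \<eta> * t * A0 * \<rho>"
  define Z where "Z = A0 * e\<^sup>2 * nf"
  have M: "M > 0" using assms(6) by (simp add: M_def)
  have \<delta>: "\<delta> \<ge> 0" and Z: "Z \<ge> 0" using assms(7-10) by (simp_all add: \<delta>_def Z_def A0_def)
  have "norm21 m (\<lambda>k. grad_psi m a b f W x k - grad_pseudo m a b f w0 W x k)
      \<le> M * (2 * (\<bar>psi m a b W x\<bar> + \<bar>f x\<bar>) * A0 * (\<kappa> * (\<kappa> * e + \<kappa> * \<delta>)\<^sup>2)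
        + 2 * (\<bar>pseudo m a b w0 W x\<bar> + \<bar>f x\<bar>) * A0 * (\<kappa> * (\<kappa> * e)\<^sup>2))"
    using norm21_grad_diff_le[OF init drift x \<kappa>, of f] by (simp add: M_def A0_def e_def \<delta>_def)
  also have "\<dots> \<le> 66 * \<kappa> ^ 7 * ((M * A0)\<^sup>2 * \<delta> ^ 5 + M * A0 * Z * \<delta>\<^sup>2 + (M * A0)\<^sup>2 * e ^ 4 * \<delta>
        + (M * A0)\<^sup>2 * e ^ 5 + M * A0 * Z * e\<^sup>2)"
  proof (rule grad_gap_poly_le)
    show "\<bar>psi m a b W x\<bar> \<le> M * (A0 * (\<kappa> * (\<kappa> * e + \<kappa> * \<delta>) ^ 3))"
      using abs_psi_le[OF init drift x \<kappa>] by (simp add: M_def A0_def e_def \<delta>_def)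
    show "\<bar>pseudo m a b w0 W x\<bar> \<le> M * (A0 * (\<kappa> * (\<kappa> * e)\<^sup>2 * (\<kappa> * e + \<kappa> * \<delta>)))"
      using abs_pseudo_le[OF init drift x \<kappa>] by (simp add: M_def A0_def e_def \<delta>_def)
    show "\<bar>f x\<bar> \<le> \<kappa> ^ 3 * Z"
      using f by (simp add: Z_def A0_def e_def M_def)
  qed (use M Z \<delta> \<kappa> in \<open>auto simp: A0_def e_def\<close>)
  finally show ?thesis
    by (simp only: \<delta>_def Z_def M_def[symmetric] powr_monomials[OF M A0_def e_def])
qed

lemma sgd_const_ge:
  assumes "K \<ge> 1" "2 * (6 * real CARD('d) + 54) ^ 4 * (K + 1) ^ 3 \<le> \<kappa>"
  shows "6 * real CARD('d) + 54 \<le> \<kappa>" "\<kappa> \<le> 66 * \<kappa> ^ 7" "4 * \<kappa> ^ 4 \<le> 66 * \<kappa> ^ 7"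
proof -
  define c where "c = 6 * real CARD('d) + 54"
  have "c \<ge> 1" by (simp add: c_def)
  then have "c \<le> c ^ 4" using power_increasing[of 1 4 c] by simp
  moreover have "c ^ 4 \<le> c ^ 4 * (K + 1) ^ 3" "0 \<le> c ^ 4 * (K + 1) ^ 3"
    using assms(1) mult_left_mono[of 1 "(K + 1) ^ 3" "c ^ 4"] by simp_all
  ultimately show c\<kappa>: "6 * real CARD('d) + 54 \<le> \<kappa>" using assms(2) unfolding c_def by linarith
  then have "1 \<le> \<kappa>" by simp
  then show "\<kappa> \<le> 66 * \<kappa> ^ 7" "4 * \<kappa> ^ 4 \<le> 66 * \<kappa> ^ 7"
    using power_increasing[of 1 7 \<kappa>] power_increasing[of 4 7 \<kappa>] by auto
qed

section \<open>The SGD trajectory\<close>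

lemma sgd_drift_le:
  fixes Ws G :: "nat \<Rightarrow> nat \<Rightarrow> 'a::real_normed_vector"
  assumes step: "\<forall>t\<in>{1..T}. \<forall>i\<in>{1..m}. Ws t i = Ws (t - 1) i - \<eta> *\<^sub>R G t i"
    and bound: "\<forall>t\<in>{1..T}. norm (G t i) \<le> B" and "\<eta> \<ge> 0" and "i \<in> {1..m}"
  shows "t \<le> T \<Longrightarrow> norm (Ws t i - Ws 0 i) \<le> \<eta> * real t * B"
proof (induction t)
  case (Suc t)
  have "norm (G (Suc t) i) \<le> B" using bound Suc.prems by simp
  then have "norm ((Ws t i - Ws 0 i) - \<eta> *\<^sub>R G (Suc t) i) \<le> \<eta> * real t * B + \<eta> * B"
    using Suc norm_triangle_ineq4[of "Ws t i - Ws 0 i" "\<eta> *\<^sub>R G (Suc t) i"] mult_left_mono assms(3)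
    by fastforce
  moreover have "Ws (Suc t) i - Ws 0 i = (Ws t i - Ws 0 i) - \<eta> *\<^sub>R G (Suc t) i"
    using step Suc.prems assms(4) by simp
  moreover have "\<eta> * real t * B + \<eta> * B = \<eta> * real (Suc t) * B" by (simp add: algebra_simps)
  ultimately show ?case by metis
qed simp

locale sgd_run =
  fixes K \<eta> al be :: real and m T :: nat and a b :: "nat \<Rightarrow> real" and w0 :: "nat \<Rightarrow> real^'d::finite"
    and f :: "real^'d \<Rightarrow> real" and X :: "(real^'d) set" and xs :: "nat \<Rightarrow> real^'d"
    and Ws :: "nat \<Rightarrow> nat \<Rightarrow> real^'d"
  assumes K: "K \<ge> 1" and m: "m \<ge> 1" and be: "be \<ge> 0" and \<eta>: "\<eta> > 0"
    and init: "\<forall>i\<in>{1..m}. \<bar>a i\<bar> \<le> real m powr (-al) \<and> (\<forall>j. \<bar>w0 i $ j\<bar> \<le> real m powr (-be))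
      \<and> \<bar>b i\<bar> \<le> real m powr (-be)"
    and rep: "\<exists>A\<in>reps m al be f. repnorm m al be A = Fnorm m al be f"
    and samples: "X \<subseteq> Gam" "\<forall>t\<in>{1..T}. xs t \<in> X"
    and start: "\<forall>i\<in>{1..m}. Ws 0 i = w0 i"
    and sgd: "\<forall>t\<in>{1..T}. \<forall>i\<in>{1..m}.
      Ws t i = Ws (t - 1) i - \<eta> *\<^sub>R grad_psi m a b f (Ws (t - 1)) (xs t) i"
    and no_explosion: "\<forall>t\<le>T. (\<forall>i\<in>{1..m}. norm (Ws t i) \<le> K) \<and> (\<forall>x\<in>Gam. \<bar>psi m a b (Ws t) x\<bar> \<le> K)"
begin

lemma Fnorm_nonneg: "Fnorm m al be f \<ge> 0"
  using rep repnorm_nonneg m by fastforce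

lemma abs_f_le:
  assumes "x \<in> Gam" "6 * real CARD('d) + 54 \<le> c"
  shows "\<bar>f x\<bar> \<le> c ^ 3 * (real m powr -al * (real m powr -be)\<^sup>2 * Fnorm m al be f)"
  using rep abs_le_repnorm_cube[OF _ _ m assms] by blast

lemma powr_rho_eq: "real m powr (-al - 2 * be) = real m powr -al * (real m powr -be)\<^sup>2"
  using powr_diff_mult_eq[of "real m" 0 1 al 2 be] m by simp

lemma norm_grad_step_le:
  assumes \<kappa>: "2 * (6 * real CARD('d) + 54) ^ 4 * (K + 1) ^ 3 \<le> \<kappa>" and "s \<in> {1..T}" "k \<in> {1..m}"
  shows "norm (grad_psi m a b f (Ws (s - 1)) (xs s) k)
    \<le> \<kappa> * real m powr -al * (real m powr (-al - 2 * be) * Fnorm m al be f + 1)"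
proof -
  define Z where "Z = real m powr -al * (real m powr -be)\<^sup>2 * Fnorm m al be f"
  have x: "xs s \<in> Gam" using samples assms(2) by auto
  have "real m powr -be \<le> 1" using m be by (simp add: powr_minus_divide ge_one_powr_ge_zero)
  then have "norm (grad_psi m a b f (Ws (s - 1)) (xs s) k)
      \<le> 2 * (6 * real CARD('d) + 54) ^ 4 * (K + 1) ^ 3 * real m powr -al * (Z + 1)"
    using init no_explosion assms(2,3) x K Fnorm_nonneg abs_f_le[OF x order_refl]
    by (intro norm_grad_psi_le_bounded) (auto simp: Gam_def Z_def)
  also have "\<dots> \<le> \<kappa> * real m powr -al * (Z + 1)"
    using \<kappa> Fnorm_nonneg by (intro mult_right_mono) (auto simp: Z_def)
  finally show ?thesis by (simp add: Z_def powr_rho_eq)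
qed

lemma drift_le:
  assumes \<kappa>: "2 * (6 * real CARD('d) + 54) ^ 4 * (K + 1) ^ 3 \<le> \<kappa>" and "t \<le> T" "k \<in> {1..m}"
  shows "norm (Ws t k - w0 k)
    \<le> \<kappa> * (\<eta> * real t * real m powr -al * (real m powr (-al - 2 * be) * Fnorm m al be f + 1))"
proof -
  have "norm (Ws t k - Ws 0 k)
      \<le> \<eta> * real t * (\<kappa> * real m powr -al * (real m powr (-al - 2 * be) * Fnorm m al be f + 1))"
    using sgd norm_grad_step_le[OF \<kappa> _ assms(3)] \<eta> assms(2,3)
    by (intro sgd_drift_le[where G = "\<lambda>s k. grad_psi m a b f (Ws (s - 1)) (xs s) k"]) auto
  then show ?thesis using start assms(3) by (simp add: algebra_simps)
qed

lemma sgd_bounds: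
  assumes \<kappa>: "2 * (6 * real CARD('d) + 54) ^ 4 * (K + 1) ^ 3 \<le> \<kappa>"
    and x: "x \<in> Gam" and t: "t \<in> {1..T}" and i: "i \<in> {1..m}"
  defines "\<rho> \<equiv> real m powr (-al - 2 * be) * Fnorm m al be f + 1"
  shows "norm (Ws t i - w0 i) \<le> 66 * \<kappa> ^ 7 * \<eta> * real t * real m powr (-al) * \<rho>
    \<and> \<bar>psi m a b (Ws t) x - pseudo m a b w0 (Ws t) x\<bar>
      \<le> 66 * \<kappa> ^ 7 * (\<eta> ^ 3 * real t ^ 3 * real m powr (1 - 4 * al) * \<rho> ^ 3
        + \<eta> * real t * real m powr (1 - 2 * al - 2 * be) * \<rho>)
    \<and> norm21 m (\<lambda>k. grad_psi m a b f (Ws t) x k - grad_pseudo m a b f w0 (Ws t) x k)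
      \<le> 66 * \<kappa> ^ 7 * (\<eta> ^ 5 * real t ^ 5 * real m powr (2 - 7 * al) * \<rho> ^ 5
        + \<eta> ^ 3 * real t ^ 3 * real m powr (2 - 5 * al - 2 * be) * \<rho> ^ 3
        + \<eta> ^ 2 * real t ^ 2 * real m powr (2 - 4 * al - 3 * be) * \<rho> ^ 2
        + \<eta> ^ 2 * real t ^ 2 * real m powr (1 - 4 * al - 2 * be) * Fnorm m al be f * \<rho> ^ 2
        + \<eta> * real t * real m powr (2 - 3 * al - 4 * be) * \<rho>
        + real m powr (2 - 2 * al - 5 * be)
        + real m powr (1 - 2 * al - 4 * be) * Fnorm m al be f)"
    (is "?a \<and> ?b \<and> ?c")
proof -
  note \<kappa>' = sgd_const_ge[OF K \<kappa>]
  have \<rho>: "\<rho> \<ge> 0" using Fnorm_nonneg by (simp add: \<rho>_def)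
  have \<eta>t: "\<eta> \<ge> 0" "real t \<ge> 0" using \<eta> by simp_all
  have xn: "norm x \<le> 1" using x by (simp add: Gam_def)
  have drift: "\<forall>k\<in>{1..m}. norm (Ws t k - w0 k) \<le> \<kappa> * (\<eta> * real t * real m powr -al * \<rho>)"
    using drift_le[OF \<kappa>] t by (simp add: \<rho>_def)
  have "\<kappa> * (\<eta> * real t * real m powr -al * \<rho>) \<le> 66 * \<kappa> ^ 7 * (\<eta> * real t * real m powr -al * \<rho>)"
    using \<eta>t \<rho> by (intro mult_right_mono \<kappa>'(2)) simp
  then have ?a using drift i by (fastforce simp: mult.assoc)
  moreover have ?b
    using abs_psi_minus_pseudo_le_powr[where W = "Ws t", OF init drift xn \<kappa>'(1) m \<eta>t \<rho>]
    by (elim order_trans, intro mult_right_mono \<kappa>'(3)) (use \<eta>t \<rho> in simp)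
  moreover have ?c
    using norm21_grad_diff_le_powr[where W = "Ws t" and f = f and x = x,
        OF init drift xn \<kappa>'(1) abs_f_le[OF x \<kappa>'(1)] m \<eta>t \<rho> Fnorm_nonneg]
    by (elim order_trans, intro mult_left_mono) (use \<eta>t \<rho> \<kappa>'(1) Fnorm_nonneg in auto)
  ultimately show ?thesis by blast
qed
end

theorem theorem3p3:
  fixes K :: real
  assumes "K \<ge> 1"
  shows "\<exists>C>0. \<forall>(m::nat) (al::real) (be::real) (a::nat \<Rightarrow> real) (b::nat \<Rightarrow> real)
      (w0::nat \<Rightarrow> real^'d::finite) (f::real^'d \<Rightarrow> real) (\<eta>::real) (T::nat) (N::nat)
      (X::(real^'d) set) (xs::nat \<Rightarrow> real^'d) (Ws::nat \<Rightarrow> nat \<Rightarrow> real^'d).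
    m \<ge> 1 \<and> al \<ge> 0 \<and> be \<ge> 0 \<and> \<eta> > 0 \<and>
    (\<forall>i\<in>{1..m}. \<bar>a i\<bar> \<le> real m powr (-al) \<and> (\<forall>j. \<bar>w0 i $ j\<bar> \<le> real m powr (-be))
        \<and> \<bar>b i\<bar> \<le> real m powr (-be)) \<and>
    inF m al be f \<and>
    (\<exists>A\<in>reps m al be f. repnorm m al be A = Fnorm m al be f) \<and>
    finite X \<and> card X = N \<and> X \<subseteq> Gam \<and>
    (\<forall>t\<in>{1..T}. xs t \<in> X) \<and>
    (\<forall>i\<in>{1..m}. Ws 0 i = w0 i) \<and>
    (\<forall>t\<in>{1..T}. \<forall>i\<in>{1..m}.
       Ws t i = Ws (t - 1) i - \<eta> *\<^sub>R grad_psi m a b f (Ws (t - 1)) (xs t) i) \<and>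
    (\<forall>t\<le>T. (\<forall>i\<in>{1..m}. norm (Ws t i) \<le> K) \<and> (\<forall>x\<in>Gam. \<bar>psi m a b (Ws t) x\<bar> \<le> K))
    \<longrightarrow>
    (\<forall>x\<in>Gam. \<forall>t\<in>{1..T}. \<forall>i\<in>{1..m}.
      (let \<rho> = real m powr (-al - 2*be) * Fnorm m al be f + 1; tt = real t; M = real m;
           nf = Fnorm m al be f in
       norm (Ws t i - w0 i) \<le> C * \<eta> * tt * M powr (-al) * \<rho>
       \<and> \<bar>psi m a b (Ws t) x - pseudo m a b w0 (Ws t) x\<bar>
           \<le> C * (\<eta>^3 * tt^3 * M powr (1 - 4*al) * \<rho>^3 + \<eta> * tt * M powr (1 - 2*al - 2*be) * \<rho>)
       \<and> norm21 m (\<lambda>k. grad_psi m a b f (Ws t) x k - grad_pseudo m a b f w0 (Ws t) x k)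
           \<le> C * (\<eta>^5 * tt^5 * M powr (2 - 7*al) * \<rho>^5
                 + \<eta>^3 * tt^3 * M powr (2 - 5*al - 2*be) * \<rho>^3
                 + \<eta>^2 * tt^2 * M powr (2 - 4*al - 3*be) * \<rho>^2
                 + \<eta>^2 * tt^2 * M powr (1 - 4*al - 2*be) * nf * \<rho>^2
                 + \<eta> * tt * M powr (2 - 3*al - 4*be) * \<rho>
                 + M powr (2 - 2*al - 5*be)
                 + M powr (1 - 2*al - 4*be) * nf)))"
proof -
  define \<kappa> :: real where "\<kappa> = 2 * (6 * real CARD('d) + 54) ^ 4 * (K + 1) ^ 3"
  have "\<kappa> > 0" using assms by (simp add: \<kappa>_def)
  show ?thesis
  proof (intro exI[of _ "66 * \<kappa> ^ 7"] conjI allI impI ballI, goal_cases)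
    case 1
    then show ?case using \<open>\<kappa> > 0\<close> by simp
  next
    case (2 m al be a b w0 f \<eta> T N X xs Ws x t i)
    interpret sgd_run K \<eta> al be m T a b w0 f X xs Ws
      by unfold_locales (use 2(1) assms in auto)
    show ?case
      unfolding Let_def \<kappa>_def by (rule sgd_bounds[OF order_refl 2(2-4)])
  qed
qed

end
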